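(* Let $N\ge 1$ and $d\ge 1$ be integers, and let $\{|0\rangle,\dots,|d-1\rangle\}$ be an orthonormal basis of $\mathcal{H}_d=\mathbb{C}^d$. Let $(a_{k,j})_{0\le k\le d-1,\,0\le j\le N}$ be a $d\times(N+1)$ complex matrix such that $a_{0,j}=1$ for all $j$, and for every $1\le k\le d-1$ and all $0\le j\ne j'\le N$ one has $a_{k,j}\neq a_{k,j'}$. Then the set $$\mathcal{B}=\Big\{|\Phi_{\vec j}\rangle=\big(a_{0,j_0}|0\rangle+a_{1,j_1}|1\rangle+\cdots+a_{d-1,j_{d-1}}|d-1\rangle\big)^{\otimes N}\ \Big|\ \vec j=(j_0,\dots,j_{d-1})\in\mathbb{Z}_{\ge0}^d,\ \textstyle\sum_{k=0}^{d-1}j_k=N\Big\}$$ consists of $\binom{N+d-1}{N}$ linearly independent vectors (one for each admissible $\vec j$), and it spans the symmetric subspace $\mathrm{Sym}_N(\mathcal{H}_d)$.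
   Context: For a permutation $\pi\in S_N$, the permutation operator on $\mathcal{H}_d^{\otimes N}$ is $P_d(\pi)=\sum_{i_1,\dots,i_N\in\{0,\dots,d-1\}}|i_{\pi^{-1}(1)},\dots,i_{\pi^{-1}(N)}\rangle\langle i_1,\dots,i_N|$. The symmetric subspace is $\mathrm{Sym}_N(\mathcal{H}_d)=\{|\Psi\rangle\in\mathcal{H}_d^{\otimes N}: P_d(\pi)|\Psi\rangle=|\Psi\rangle\ \forall\pi\in S_N\}$; its dimension is $\binom{N+d-1}{N}$. *)

theory Defs
  imports "HOL-Analysis.Analysis" "HOL-Combinatorics.Permutations" "HOL-Library.Function_Algebras"
begin

text \<open>Vectors of the tensor power H_d^{(x)N} are modelled as coefficient functions
  on computational basis labels (i_1,...,i_N), i.e. lists of length N with entries < d;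
  they vanish outside this index set.\<close>

definition basis_idx :: "nat \<Rightarrow> nat \<Rightarrow> nat list set" where
  "basis_idx N d = {is. length is = N \<and> set is \<subseteq> {..<d}}"

definition tensor_space :: "nat \<Rightarrow> nat \<Rightarrow> (nat list \<Rightarrow> complex) set" where
  "tensor_space N d = {\<Psi>. \<forall>is. is \<notin> basis_idx N d \<longrightarrow> \<Psi> is = 0}"

definition cscale :: "complex \<Rightarrow> (nat list \<Rightarrow> complex) \<Rightarrow> (nat list \<Rightarrow> complex)" where
  "cscale c f = (\<lambda>x. c * f x)"

definition tensor_pow :: "nat \<Rightarrow> nat \<Rightarrow> (nat \<Rightarrow> complex) \<Rightarrow> (nat list \<Rightarrow> complex)" where
  "tensor_pow N d v = (\<lambda>is. if is \<in> basis_idx N d then prod_list (map v is) else 0)"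

text \<open>P(pi) sends |i_0..i_{N-1}> to |i_{pi^-1(0)} .. i_{pi^-1(N-1)}>, so
  the coefficient of |k_0..k_{N-1}> in P(pi)Psi is the coefficient of
  |k_{pi(0)} .. k_{pi(N-1)}> in Psi.\<close>
definition perm_op :: "nat \<Rightarrow> nat \<Rightarrow> (nat \<Rightarrow> nat) \<Rightarrow> (nat list \<Rightarrow> complex) \<Rightarrow> (nat list \<Rightarrow> complex)" where
  "perm_op N d \<pi> \<Psi> = (\<lambda>ks. if ks \<in> basis_idx N d then \<Psi> (map (\<lambda>l. ks ! \<pi> l) [0..<N]) else 0)"

definition sym_subspace :: "nat \<Rightarrow> nat \<Rightarrow> (nat list \<Rightarrow> complex) set" where
  "sym_subspace N d = {\<Psi> \<in> tensor_space N d. \<forall>\<pi>. \<pi> permutes {..<N} \<longrightarrow> perm_op N d \<pi> \<Psi> = \<Psi>}"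

definition adm_idx :: "nat \<Rightarrow> nat \<Rightarrow> nat list set" where
  "adm_idx N d = {js. length js = d \<and> sum_list js = N}"

definition Phi :: "nat \<Rightarrow> nat \<Rightarrow> (nat \<Rightarrow> nat \<Rightarrow> complex) \<Rightarrow> nat list \<Rightarrow> (nat list \<Rightarrow> complex)" where
  "Phi N d a js = tensor_pow N d (\<lambda>k. a k (js ! k))"

end

theory Submission
  imports Defs
begin

text \<open>
  Put v_j = (a_{0,j_0}, ..., a_{d-1,j_{d-1}}), so that Phi_j is the N-th tensor power of v_j.
  A tensor product of N linear forms on C^d, evaluated at the N-th tensor power of v, is the
  product of the forms evaluated at v.  For an admissible j take j_0 copies of v |-> v_0 and,
  for every k >= 1 and t < j_k, the form v |-> v_k - a_{k,t} v_0.  As a_{k,t} is injective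
  in t, the resulting functional does not vanish at Phi_j, but it kills every Phi_j' with
  j' ~= j and j'_0 >= j_0, since such a j' has j'_k < j_k for some k >= 1.  This
  triangularity gives linear independence.  A symmetric tensor is constant on the basis
  labels with a given occupation vector, so the symmetric subspace is spanned by one vector
  per occupation vector, i.e. by at most as many vectors as there are Phi_j.
\<close>

context vector_space
begin

lemma independent_if_triangular_functionals:
  fixes v :: "'i \<Rightarrow> 'b" and F :: "'i \<Rightarrow> 'b \<Rightarrow> 'a" and rank :: "'i \<Rightarrow> 'r::linorder"
  assumes "finite S"
    and lin: "\<And>j. j \<in> S \<Longrightarrow> Vector_Spaces.linear scale (*) (F j)"
    and diag: "\<And>j. j \<in> S \<Longrightarrow> F j (v j) \<noteq> 0"
    and tri: "\<And>j j'. j \<in> S \<Longrightarrow> j' \<in> S \<Longrightarrow> j' \<noteq> j \<Longrightarrow> rank j \<le> rank j' \<Longrightarrow> F j (v j') = 0"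
  shows "inj_on v S \<and> independent (v ` S)"
proof
  show inj: "inj_on v S"
  proof (rule inj_onI, rule ccontr)
    fix j j' assume *: "j \<in> S" "j' \<in> S" "v j = v j'" "j \<noteq> j'"
    consider "rank j \<le> rank j'" | "rank j' \<le> rank j" by (rule le_cases)
    then show False
    proof cases
      case 1
      with * have "F j (v j') = 0" by (intro tri) auto
      with * diag[of j] show False by simp
    next
      case 2
      with * have "F j' (v j) = 0" by (intro tri) auto
      with * diag[of j'] show False by simp
    qed
  qed
  show "independent (v ` S)"
  proof
    assume "dependent (v ` S)"
    then obtain u where u: "\<exists>x\<in>v ` S. u x \<noteq> 0" "(\<Sum>x\<in>v ` S. u x *s x) = 0"
      using dependent_finite[of "v ` S"] \<open>finite S\<close> by auto
    define c where "c j = u (v j)" for j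
    define T where "T = {j \<in> S. c j \<noteq> 0}"
    have "finite (rank ` T)" "rank ` T \<noteq> {}" using \<open>finite S\<close> u(1) by (auto simp: T_def c_def)
    then have "Min (rank ` T) \<in> rank ` T" by (rule Min_in)
    then obtain j where j: "j \<in> T" "rank j = Min (rank ` T)" by auto
    have jS: "j \<in> S" using j by (simp add: T_def)
    interpret Fj: Vector_Spaces.linear scale "(*)" "F j" by (rule lin[OF jS])
    have "0 = F j (\<Sum>j'\<in>S. c j' *s v j')"
      using u(2) by (simp add: sum.reindex[OF inj] c_def)
    also have "\<dots> = (\<Sum>j'\<in>S. c j' * F j (v j'))"
      by (simp add: Fj.sum Fj.scale)
    also have "\<dots> = c j * F j (v j) + (\<Sum>j'\<in>S - {j}. c j' * F j (v j'))"
      by (rule sum.remove[OF \<open>finite S\<close> jS])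
    also have "(\<Sum>j'\<in>S - {j}. c j' * F j (v j')) = 0"
    proof (rule sum.neutral, rule ballI)
      fix j' assume j': "j' \<in> S - {j}"
      show "c j' * F j (v j') = 0"
      proof (cases "c j' = 0")
        case False
        hence "rank j \<le> rank j'" using j j' \<open>finite (rank ` T)\<close> by (simp add: T_def)
        thus ?thesis using tri jS j' by simp
      qed simp
    qed
    finally show False using j diag[OF jS] by (simp add: T_def)
  qed
qed

lemma subset_span_if_independent_card_le:
  assumes "B \<subseteq> W" "independent B" "finite B"
    and "W \<subseteq> span E" "finite E" "card E \<le> card B"
  shows "W \<subseteq> span B"
proof
  fix x assume "x \<in> W"
  show "x \<in> span B"
  proof (rule ccontr)
    assume x: "x \<notin> span B"
    have "independent (insert x B)" by (rule independent_insertI[OF x \<open>independent B\<close>])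
    moreover have "insert x B \<subseteq> span E" using assms(1,4) \<open>x \<in> W\<close> by blast
    ultimately have "card (insert x B) \<le> card E"
      using independent_span_bound[OF \<open>finite E\<close>] by blast
    moreover have "x \<notin> B" using x span_base by blast
    ultimately show False using assms(3,6) by simp
  qed
qed

end

interpretation V: vector_space cscale
  by unfold_locales (auto simp: cscale_def fun_eq_iff algebra_simps)

lemma cscale_apply [simp]: "cscale c f x = c * f x"
  by (simp add: cscale_def)

lemma sum_fun_apply: "(\<Sum>j\<in>S. f j) x = (\<Sum>j\<in>S. f j x)"
  by (induction S rule: infinite_finite_induct) auto

lemma linear_weighted_sum: "Vector_Spaces.linear cscale (*) (\<lambda>\<Psi>. \<Sum>x\<in>X. w x * \<Psi> x)"
  by unfold_locales (auto simp: sum.distrib sum_distrib_left algebra_simps)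

lemma basis_idx_Suc: "basis_idx (Suc n) d = (\<lambda>(i, is). i # is) ` ({..<d} \<times> basis_idx n d)"
  by (auto simp: basis_idx_def length_Suc_conv image_iff)

lemma finite_basis_idx: "finite (basis_idx n d)"
proof -
  have "basis_idx n d = {xs. set xs \<subseteq> {..<d} \<and> length xs = n}"
    by (auto simp: basis_idx_def)
  then show ?thesis using finite_lists_length_eq[of "{..<d}" n] by simp
qed

lemma tensor_pow_Cons: "i < d \<Longrightarrow> tensor_pow (Suc n) d v (i # is) = v i * tensor_pow n d v is"
  by (simp add: tensor_pow_def basis_idx_def)

fun tensor_form :: "(nat \<Rightarrow> complex) list \<Rightarrow> nat list \<Rightarrow> complex" where
  "tensor_form (g # gs) (i # is) = g i * tensor_form gs is"
| "tensor_form _ _ = 1"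

lemma sum_tensor_form_tensor_pow:
  "(\<Sum>is\<in>basis_idx (length gs) d. tensor_form gs is * tensor_pow (length gs) d v is)
     = (\<Prod>g\<leftarrow>gs. \<Sum>i<d. g i * v i)"
proof (induction gs)
  case Nil
  have "basis_idx 0 d = {[]}" by (auto simp: basis_idx_def)
  then show ?case by (simp add: tensor_pow_def)
next
  case (Cons g gs)
  let ?B = "basis_idx (length gs) d" and ?t = "\<lambda>is. tensor_form gs is * tensor_pow (length gs) d v is"
  have inj: "inj_on (\<lambda>(i, is). i # is) ({..<d} \<times> ?B)"
    by (auto simp: inj_on_def)
  have "(\<Sum>is\<in>basis_idx (length (g # gs)) d. tensor_form (g # gs) is * tensor_pow (length (g # gs)) d v is)
      = (\<Sum>(i, is)\<in>{..<d} \<times> ?B. g i * v i * ?t is)"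
    by (simp only: length_Cons basis_idx_Suc sum.reindex[OF inj])
      (auto simp: tensor_pow_Cons intro!: sum.cong)
  also have "\<dots> = (\<Sum>i<d. g i * v i) * (\<Sum>is\<in>?B. ?t is)"
    by (simp add: sum.cartesian_product[symmetric] sum_product)
  finally show ?case using Cons.IH by simp
qed

lemma subspace_sym_subspace: "V.subspace (sym_subspace N d)"
  unfolding V.subspace_def sym_subspace_def tensor_space_def
  by (auto simp: perm_op_def fun_eq_iff)

lemma perm_op_apply:
  assumes "\<pi> permutes {..<N}" "ks \<in> basis_idx N d"
  shows "perm_op N d \<pi> \<Psi> ks = \<Psi> (permute_list \<pi> ks)"
  using assms by (simp add: perm_op_def permute_list_def basis_idx_def)

lemma tensor_pow_in_sym_subspace: "tensor_pow N d v \<in> sym_subspace N d"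
  unfolding sym_subspace_def tensor_space_def
proof safe
  fix \<pi> assume \<pi>: "\<pi> permutes {..<N}"
  show "perm_op N d \<pi> (tensor_pow N d v) = tensor_pow N d v"
  proof
    fix ks
    show "perm_op N d \<pi> (tensor_pow N d v) ks = tensor_pow N d v ks"
    proof (cases "ks \<in> basis_idx N d")
      case True
      then have \<pi>': "\<pi> permutes {..<length ks}" using \<pi> by (simp add: basis_idx_def)
      then have "permute_list \<pi> ks \<in> basis_idx N d" using True by (simp add: basis_idx_def)
      moreover have "prod_list (map v (permute_list \<pi> ks)) = prod_list (map v ks)"
        by (metis \<pi>' mset_map mset_permute_list prod_mset_prod_list)
      ultimately show ?thesis using True \<pi> by (simp add: perm_op_apply tensor_pow_def)
    qed (simp add: perm_op_def tensor_pow_def)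
  qed
qed (simp add: tensor_pow_def)

lemma Phi_in_sym_subspace: "Phi N d a j \<in> sym_subspace N d"
  by (simp add: Phi_def tensor_pow_in_sym_subspace)

definition occupation :: "nat \<Rightarrow> nat list \<Rightarrow> nat list" where
  "occupation d is = map (count_list is) [0..<d]"

lemma occupation_in_adm_idx: "is \<in> basis_idx N d \<Longrightarrow> occupation d is \<in> adm_idx N d"
  by (simp add: adm_idx_def basis_idx_def occupation_def sum_set_upt_conv_sum_list_nat[symmetric]
      atLeast0LessThan sum_count_set)

lemma mset_eq_if_occupation_eq:
  assumes "xs \<in> basis_idx N d" "ys \<in> basis_idx N d" "occupation d xs = occupation d ys"
  shows "mset xs = mset ys"
proof (rule multiset_eqI)
  fix k
  show "count (mset xs) k = count (mset ys) k"
  proof (cases "k < d")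
    case True
    then have "occupation d xs ! k = occupation d ys ! k" using assms(3) by simp
    then show ?thesis using True by (simp add: occupation_def count_mset)
  next
    case False
    then have "k \<notin> set xs" "k \<notin> set ys" using assms(1,2) by (auto simp: basis_idx_def)
    then show ?thesis by (simp add: count_mset count_list_0_iff)
  qed
qed

lemma sym_subspace_eq_if_occupation_eq:
  assumes \<Psi>: "\<Psi> \<in> sym_subspace N d" and xs: "xs \<in> basis_idx N d" and ys: "ys \<in> basis_idx N d"
    and "occupation d xs = occupation d ys"
  shows "\<Psi> xs = \<Psi> ys"
proof -
  have "mset xs = mset ys" using mset_eq_if_occupation_eq assms(2-) by blast
  then obtain \<pi> where \<pi>: "\<pi> permutes {..<length ys}" "permute_list \<pi> ys = xs"
    using mset_eq_permutation by metis
  have "length ys = N" using ys by (simp add: basis_idx_def)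
  then have "perm_op N d \<pi> \<Psi> ys = \<Psi> ys" using \<Psi> \<pi>(1) by (simp add: sym_subspace_def)
  then show ?thesis using ys \<pi> \<open>length ys = N\<close> by (simp add: perm_op_apply)
qed

definition occupation_state :: "nat \<Rightarrow> nat \<Rightarrow> nat list \<Rightarrow> nat list \<Rightarrow> complex" where
  "occupation_state N d c = (\<lambda>is. of_bool (is \<in> basis_idx N d \<and> occupation d is = c))"

lemma sym_subspace_subset_span_occupation_states:
  "sym_subspace N d \<subseteq> V.span (occupation_state N d ` occupation d ` basis_idx N d)"
proof
  fix \<Psi> assume \<Psi>: "\<Psi> \<in> sym_subspace N d"
  let ?C = "occupation d ` basis_idx N d"
  define rep where "rep = inv_into (basis_idx N d) (occupation d)"
  have "\<Psi> = (\<Sum>c\<in>?C. cscale (\<Psi> (rep c)) (occupation_state N d c))"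
  proof
    fix xs
    show "\<Psi> xs = (\<Sum>c\<in>?C. cscale (\<Psi> (rep c)) (occupation_state N d c)) xs"
    proof (cases "xs \<in> basis_idx N d")
      case False
      then have "\<Psi> xs = 0" using \<Psi> by (simp add: sym_subspace_def tensor_space_def)
      then show ?thesis using False by (simp add: sum_fun_apply occupation_state_def)
    next
      case True
      then have rep: "rep (occupation d xs) \<in> basis_idx N d"
        "occupation d (rep (occupation d xs)) = occupation d xs"
        by (simp_all add: rep_def inv_into_into f_inv_into_f)
      have "(\<Sum>c\<in>?C. cscale (\<Psi> (rep c)) (occupation_state N d c)) xs
          = (\<Sum>c\<in>?C. if c = occupation d xs then \<Psi> (rep c) else 0)"
        using True by (auto simp: sum_fun_apply occupation_state_def intro!: sum.cong)
      also have "\<dots> = \<Psi> (rep (occupation d xs))"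
        using True finite_basis_idx by (simp add: sum.delta')
      also have "\<dots> = \<Psi> xs"
        using sym_subspace_eq_if_occupation_eq[OF \<Psi> rep(1) True rep(2)] .
      finally show ?thesis by simp
    qed
  qed
  also have "\<dots> \<in> V.span (occupation_state N d ` ?C)"
    by (intro V.span_sum V.span_scale V.span_base) auto
  finally show "\<Psi> \<in> V.span (occupation_state N d ` ?C)" .
qed

lemma finite_adm_idx: "finite (adm_idx N d)"
proof -
  have "adm_idx N d \<subseteq> {xs. set xs \<subseteq> {..N} \<and> length xs = d}"
    by (auto simp: adm_idx_def member_le_sum_list)
  then show ?thesis using finite_lists_length_eq[of "{..N}" d] finite_subset by blast
qed

lemma card_adm_idx: "card (adm_idx N d) = (N + d - 1) choose N"
  using card_length_sum_list[of d N] by (simp add: adm_idx_def)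

lemma adm_idx_nth_le: "j \<in> adm_idx N d \<Longrightarrow> k < d \<Longrightarrow> j ! k \<le> N"
  using elem_le_sum_list[of k j] by (simp add: adm_idx_def)

lemma card_occupation_states_le:
  "card (occupation_state N d ` occupation d ` basis_idx N d) \<le> card (adm_idx N d)"
proof -
  have "card (occupation_state N d ` occupation d ` basis_idx N d) \<le> card (occupation d ` basis_idx N d)"
    by (rule card_image_le) (simp add: finite_basis_idx)
  also have "\<dots> \<le> card (adm_idx N d)"
    by (rule card_mono[OF finite_adm_idx]) (auto simp: occupation_in_adm_idx)
  finally show ?thesis .
qed

lemma exists_nth_less_if_sum_list_eq:
  fixes xs ys :: "nat list"
  assumes "length xs = length ys" "sum_list xs = sum_list ys" "xs \<noteq> ys"
  shows "\<exists>k < length xs. xs ! k < ys ! k"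
proof (rule ccontr)
  assume "\<not> ?thesis"
  then have le: "\<forall>k\<in>{..<length xs}. ys ! k \<le> xs ! k" by auto
  obtain k where "k < length xs" "xs ! k \<noteq> ys ! k"
    using assms(1,3) nth_equalityI by blast
  with le have "(\<Sum>k<length xs. ys ! k) < (\<Sum>k<length xs. xs ! k)"
    by (intro sum_strict_mono_ex1) (auto intro!: bexI[of _ k] simp: order.strict_iff_order)
  then show False
    using assms(1,2) by (simp add: sum_list_sum_nth atLeast0LessThan)
qed

definition vanishing_form :: "(nat \<Rightarrow> nat \<Rightarrow> complex) \<Rightarrow> nat \<Rightarrow> nat \<Rightarrow> nat \<Rightarrow> complex" where
  "vanishing_form a k t = (\<lambda>i. of_bool (i = k) - of_bool (i = 0) * a k t)"

lemma sum_lessThan_of_bool_eq_mult: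
  fixes v :: "nat \<Rightarrow> 'a::comm_semiring_1"
  assumes "k < d"
  shows "(\<Sum>i<d. of_bool (i = k) * v i) = v k"
proof -
  have "{..<d} \<inter> {i. i = k} = {k}" using assms by auto
  then show ?thesis by simp
qed

lemma pair_vanishing_form:
  assumes "0 < k" "k < d"
  shows "(\<Sum>i<d. vanishing_form a k t i * v i) = v k - a k t * v 0"
proof -
  have "(\<Sum>i<d. vanishing_form a k t i * v i)
      = (\<Sum>i<d. of_bool (i = k) * v i - a k t * (of_bool (i = 0) * v i))"
    by (rule sum.cong) (simp_all add: vanishing_form_def algebra_simps)
  also have "\<dots> = (\<Sum>i<d. of_bool (i = k) * v i) - a k t * (\<Sum>i<d. of_bool (i = 0) * v i)"
    by (simp only: sum_subtractf sum_distrib_left)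
  also have "\<dots> = v k - a k t * v 0"
    using assms by (simp only: sum_lessThan_of_bool_eq_mult)
  finally show ?thesis .
qed

definition dual_forms :: "nat \<Rightarrow> (nat \<Rightarrow> nat \<Rightarrow> complex) \<Rightarrow> nat list \<Rightarrow> (nat \<Rightarrow> complex) list" where
  "dual_forms d a j = replicate (j ! 0) (\<lambda>i. of_bool (i = 0))
     @ concat (map (\<lambda>k. map (vanishing_form a k) [0..<j ! k]) [1..<d])"

lemma length_dual_forms:
  assumes "length j = d" "0 < d"
  shows "length (dual_forms d a j) = sum_list j"
proof -
  have "length (dual_forms d a j) = j ! 0 + (\<Sum>k = 1..<d. j ! k)"
    by (simp add: dual_forms_def length_concat comp_def interv_sum_list_conv_sum_set_nat)
  also have "\<dots> = (\<Sum>k<d. j ! k)"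
    using assms(2) by (simp add: atLeast0LessThan[symmetric] sum.atLeast_Suc_lessThan)
  also have "\<dots> = sum_list j"
    using assms(1) by (simp add: sum_list_sum_nth atLeast0LessThan)
  finally show ?thesis .
qed

lemma set_dual_forms:
  "set (dual_forms d a j)
     \<subseteq> insert (\<lambda>i. of_bool (i = 0)) {vanishing_form a k t | k t. 0 < k \<and> k < d \<and> t < j ! k}"
  by (fastforce simp: dual_forms_def)

definition dual_functional ::
  "nat \<Rightarrow> nat \<Rightarrow> (nat \<Rightarrow> nat \<Rightarrow> complex) \<Rightarrow> nat list \<Rightarrow> (nat list \<Rightarrow> complex) \<Rightarrow> complex" where
  "dual_functional N d a j \<Psi> = (\<Sum>is\<in>basis_idx N d. tensor_form (dual_forms d a j) is * \<Psi> is)"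

lemma dual_functional_Phi:
  assumes "j \<in> adm_idx N d" "0 < d"
  shows "dual_functional N d a j (Phi N d a j') = (\<Prod>g\<leftarrow>dual_forms d a j. \<Sum>i<d. g i * a i (j' ! i))"
  using sum_tensor_form_tensor_pow[of "dual_forms d a j" d "\<lambda>i. a i (j' ! i)"] assms
  by (simp add: dual_functional_def Phi_def adm_idx_def length_dual_forms)

lemma dual_functional_Phi_eq_0:
  assumes a0: "\<And>t. t \<le> N \<Longrightarrow> a 0 t = 1" and "0 < d"
    and j: "j \<in> adm_idx N d" and j': "j' \<in> adm_idx N d" "j' \<noteq> j" and "j ! 0 \<le> j' ! 0"
  shows "dual_functional N d a j (Phi N d a j') = 0"
proof -
  obtain k where k: "k < d" "j' ! k < j ! k"
    using exists_nth_less_if_sum_list_eq[of j' j] j j' by (auto simp: adm_idx_def)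
  with \<open>j ! 0 \<le> j' ! 0\<close> have "0 < k" by (cases k) auto
  with k have "vanishing_form a k (j' ! k) \<in> set (dual_forms d a j)"
    by (force simp: dual_forms_def)
  moreover have "(\<Sum>i<d. vanishing_form a k (j' ! k) i * a i (j' ! i)) = 0"
    using \<open>0 < k\<close> k a0 adm_idx_nth_le[OF j'(1) \<open>0 < d\<close>] by (simp add: pair_vanishing_form)
  ultimately show ?thesis
    by (force simp: dual_functional_Phi[OF j \<open>0 < d\<close>] prod_list_zero_iff)
qed

lemma dual_functional_Phi_self_ne_0:
  assumes a0: "\<And>t. t \<le> N \<Longrightarrow> a 0 t = 1"
    and a_inj: "\<And>k t t'. 0 < k \<Longrightarrow> k < d \<Longrightarrow> t \<le> N \<Longrightarrow> t' \<le> N \<Longrightarrow> t \<noteq> t' \<Longrightarrow> a k t \<noteq> a k t'"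
    and "0 < d" and j: "j \<in> adm_idx N d"
  shows "dual_functional N d a j (Phi N d a j) \<noteq> 0"
proof -
  have a_j0: "a 0 (j ! 0) = 1" using a0 adm_idx_nth_le[OF j \<open>0 < d\<close>] .
  have "(\<Sum>i<d. g i * a i (j ! i)) \<noteq> 0" if "g \<in> set (dual_forms d a j)" for g
  proof (cases "g = (\<lambda>i. of_bool (i = 0))")
    case True
    then show ?thesis using a_j0 sum_lessThan_of_bool_eq_mult[OF \<open>0 < d\<close>, where v = "\<lambda>i. a i (j ! i)"]
      by (simp del: sum_of_bool_mult_eq)
  next
    case False
    then have "g \<in> {vanishing_form a k t | k t. 0 < k \<and> k < d \<and> t < j ! k}"
      using that set_dual_forms by blast
    then obtain k t where kt: "0 < k" "k < d" "t < j ! k" "g = vanishing_form a k t"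
      by blast
    then have "a k (j ! k) \<noteq> a k t"
      using a_inj[of k "j ! k" t] adm_idx_nth_le[OF j \<open>k < d\<close>] by simp
    then show ?thesis using kt a_j0 by (simp add: pair_vanishing_form)
  qed
  then show ?thesis
    by (auto simp: dual_functional_Phi[OF j \<open>0 < d\<close>] prod_list_zero_iff)
qed

lemma inj_on_Phi_and_independent:
  assumes a0: "\<And>t. t \<le> N \<Longrightarrow> a 0 t = 1"
    and a_inj: "\<And>k t t'. 0 < k \<Longrightarrow> k < d \<Longrightarrow> t \<le> N \<Longrightarrow> t' \<le> N \<Longrightarrow> t \<noteq> t' \<Longrightarrow> a k t \<noteq> a k t'"
    and "0 < d"
  shows "inj_on (Phi N d a) (adm_idx N d) \<and> V.independent (Phi N d a ` adm_idx N d)"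
proof (rule V.independent_if_triangular_functionals
    [where F = "dual_functional N d a" and rank = "\<lambda>j. j ! 0"])
  show "Vector_Spaces.linear cscale (*) (dual_functional N d a j)" for j
    unfolding dual_functional_def by (rule linear_weighted_sum)
  show "dual_functional N d a j (Phi N d a j) \<noteq> 0" if "j \<in> adm_idx N d" for j
    using a0 a_inj \<open>0 < d\<close> that by (rule dual_functional_Phi_self_ne_0)
  show "dual_functional N d a j (Phi N d a j') = 0"
    if "j \<in> adm_idx N d" "j' \<in> adm_idx N d" "j' \<noteq> j" "j ! 0 \<le> j' ! 0" for j j'
    using a0 \<open>0 < d\<close> that by (rule dual_functional_Phi_eq_0)
qed (rule finite_adm_idx)

theorem theorem1:
  fixes N d :: nat and a :: "nat \<Rightarrow> nat \<Rightarrow> complex"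
  assumes "N \<ge> 1" and "d \<ge> 1"
    and "\<And>j. j \<le> N \<Longrightarrow> a 0 j = 1"
    and "\<And>k j j'. 1 \<le> k \<Longrightarrow> k \<le> d - 1 \<Longrightarrow> j \<le> N \<Longrightarrow> j' \<le> N \<Longrightarrow> j \<noteq> j' \<Longrightarrow> a k j \<noteq> a k j'"
  shows "inj_on (Phi N d a) (adm_idx N d)
    \<and> card (Phi N d a ` adm_idx N d) = (N + d - 1) choose N
    \<and> \<not> module.dependent cscale (Phi N d a ` adm_idx N d)
    \<and> module.span cscale (Phi N d a ` adm_idx N d) = sym_subspace N d"
proof -
  let ?B = "Phi N d a ` adm_idx N d"
  have "inj_on (Phi N d a) (adm_idx N d) \<and> V.independent ?B"
    using assms(2-4) by (intro inj_on_Phi_and_independent) auto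
  then have inj: "inj_on (Phi N d a) (adm_idx N d)" and indep: "V.independent ?B" by auto
  have card: "card ?B = (N + d - 1) choose N"
    using card_image[OF inj] card_adm_idx by simp
  have B_sym: "?B \<subseteq> sym_subspace N d"
    using Phi_in_sym_subspace by blast
  have "sym_subspace N d \<subseteq> V.span ?B"
    using card card_occupation_states_le[of N d] card_adm_idx
    by (intro V.subset_span_if_independent_card_le[OF B_sym indep _
          sym_subspace_subset_span_occupation_states])
      (simp_all add: finite_adm_idx finite_basis_idx)
  moreover have "V.span ?B \<subseteq> sym_subspace N d"
    using B_sym subspace_sym_subspace by (rule V.span_minimal)
  ultimately show ?thesis using inj card indep by auto
qed

end
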